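(* Let $(G,\omega)$ be a weighted digraph without loops, and suppose $G$ has $b$ reciprocal pairs of edges $\{(u_i,v_i),(v_i,u_i)\}$, $i=1,\dots,b$, with weights $w(i)=\omega((u_i,v_i))$ and $w'(i)=\omega((v_i,u_i))$. Let $\Phi(A,t):=I+tL^T\sqrt Z\,(I-tV)^{-1}\sqrt Z\,R$. Then, as rational functions of $t$, \[\det\Phi(A,t)=\frac{\prod_{i=1}^b\bigl(1-t^2w(i)w'(i)\bigr)}{\det(I-tV)}.\]
   Context: $G=(V(G),E)$ with $n$ vertices and $m$ edges, $\omega:E\to(0,\infty)$. Source matrix $L\in\{0,1\}^{m\times n}$: $L_{ej}=1$ iff $e=(j,\cdot)$; target matrix $R\in\{0,1\}^{m\times n}$: $R_{ej}=1$ iff $e=(\cdot,j)$. $Z$ is the $m\times m$ diagonal matrix with $Z_{ee}=\omega(e)$, and $\sqrt Z$ its entrywise square root. $V$ is the $m\times m$ matrix with $V_{ef}=\sqrt{\omega(e)\omega(f)}$ if $e=(i,j)$, $f=(j,k)$ with $k\ne i$, and $V_{ef}=0$ otherwise. *)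

theory Defs
  imports Complex_Main "Jordan_Normal_Form.Gauss_Jordan_Elimination" "Jordan_Normal_Form.Determinant"
begin

text \<open>A weighted digraph on the vertex set {0..<n}: its edges are given by a list es
  of distinct pairs (i,j) (an edge from i to j), the position of an edge in the list
  being its index e in {0..<m}, m = length es.\<close>

definition wdigraph :: "nat \<Rightarrow> (nat \<times> nat) list \<Rightarrow> (nat \<times> nat \<Rightarrow> real) \<Rightarrow> bool" where
  "wdigraph n es w \<longleftrightarrow> distinct es \<and> (\<forall>(i,j)\<in>set es. i < n \<and> j < n) \<and> (\<forall>e\<in>set es. w e > 0)"

definition loopless :: "(nat \<times> nat) list \<Rightarrow> bool" where
  "loopless es \<longleftrightarrow> (\<forall>(i,j)\<in>set es. i \<noteq> j)"

definition src_mat :: "nat \<Rightarrow> (nat \<times> nat) list \<Rightarrow> real mat" where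
  "src_mat n es = mat (length es) n (\<lambda>(e,j). if fst (es ! e) = j then 1 else 0)"

definition tgt_mat :: "nat \<Rightarrow> (nat \<times> nat) list \<Rightarrow> real mat" where
  "tgt_mat n es = mat (length es) n (\<lambda>(e,j). if snd (es ! e) = j then 1 else 0)"

definition weight_mat :: "(nat \<times> nat) list \<Rightarrow> (nat \<times> nat \<Rightarrow> real) \<Rightarrow> real mat" where
  "weight_mat es w = mat (length es) (length es) (\<lambda>(e,f). if e = f then w (es ! e) else 0)"

definition sqrt_weight_mat :: "(nat \<times> nat) list \<Rightarrow> (nat \<times> nat \<Rightarrow> real) \<Rightarrow> real mat" where
  "sqrt_weight_mat es w = map_mat sqrt (weight_mat es w)"

definition nb_mat :: "(nat \<times> nat) list \<Rightarrow> (nat \<times> nat \<Rightarrow> real) \<Rightarrow> real mat" where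
  "nb_mat es w = mat (length es) (length es) (\<lambda>(e,f).
     if snd (es ! e) = fst (es ! f) \<and> snd (es ! f) \<noteq> fst (es ! e)
     then sqrt (w (es ! e) * w (es ! f)) else 0)"

text \<open>Phi(t) = I + t L^T sqrt Z (I - tV)^{-1} sqrt Z R (meaningful when I - tV is invertible).\<close>
definition Phi_mat :: "nat \<Rightarrow> (nat \<times> nat) list \<Rightarrow> (nat \<times> nat \<Rightarrow> real) \<Rightarrow> real \<Rightarrow> real mat" where
  "Phi_mat n es w t = 1\<^sub>m n + t \<cdot>\<^sub>m (transpose_mat (src_mat n es) * sqrt_weight_mat es w
      * the (mat_inverse (1\<^sub>m (length es) - t \<cdot>\<^sub>m nb_mat es w)) * sqrt_weight_mat es w * tgt_mat n es)"

definition recip_pairs :: "(nat \<times> nat) list \<Rightarrow> (nat \<times> nat) set" where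
  "recip_pairs es = {(u,v). (u,v) \<in> set es \<and> (v,u) \<in> set es \<and> u < v}"

end

theory Submission
  imports Defs
begin

text \<open>
  By the Weinstein--Aronszajn identity \<open>det (I + A B) = det (I + B A)\<close>,
  \<open>det \<Phi> \<cdot> det (I - t V) = det (I - t V + t \<surd>Z R L\<^sup>T \<surd>Z)\<close>.  The matrix \<open>\<surd>Z R L\<^sup>T \<surd>Z\<close>
  is the weighted edge-adjacency matrix (edge \<open>e\<close> followed by edge \<open>f\<close>); it exceeds \<open>V\<close> exactly by
  the backtracking entries, which pair an edge with its reverse and so form \<open>N + N\<^sup>T\<close> with
  \<open>N\<^sup>2 = 0\<close>.  Then \<open>(I - t N) (I + t N + t N\<^sup>T) (I - t N\<^sup>T) = I - t\<^sup>2 N N\<^sup>T\<close>, the outer factors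
  have determinant 1, and \<open>N N\<^sup>T\<close> is diagonal with entry \<open>w(i) w'(i)\<close> on one edge of the
  \<open>i\<close>-th reciprocal pair and \<open>0\<close> elsewhere.
\<close>

lemma det_one_plus_mult_commute:
  fixes A B :: "'a :: idom mat"
  assumes A: "A \<in> carrier_mat n m" and B: "B \<in> carrier_mat m n"
  shows "det (1\<^sub>m n + A * B) = det (1\<^sub>m m + B * A)"
proof -
  define M where "M = four_block_mat (1\<^sub>m n) (-A) B (1\<^sub>m m)"
  have neg_zero: "- 0\<^sub>m m m + 1\<^sub>m m = (1\<^sub>m m :: 'a mat)" by (rule eq_matI) auto
  have M: "M \<in> carrier_mat (n + m) (n + m)" unfolding M_def using A B by auto
  have "det (1\<^sub>m n + A * B) = det (four_block_mat (1\<^sub>m n) A (0\<^sub>m m n) (1\<^sub>m m) * M)"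
    unfolding M_def using A B
    by (subst mult_four_block_mat) (auto simp: neg_zero det_four_block_mat_upper_right_zero[of _ n _ m])
  also have "\<dots> = det M"
    using A M by (subst det_mult[of _ "n + m"]) (auto simp: det_four_block_mat_lower_left_zero[of _ n _ m])
  also have "\<dots> = det (four_block_mat (1\<^sub>m n) (0\<^sub>m n m) (-B) (1\<^sub>m m) * M)"
    using B M by (subst det_mult[of _ "n + m"]) (auto simp: det_four_block_mat_upper_right_zero[of _ n _ m])
  also have "\<dots> = det (1\<^sub>m m + B * A)"
    unfolding M_def using A B
    by (subst mult_four_block_mat) (auto simp: comm_add_mat[of "B * A" m m] det_four_block_mat_lower_left_zero[of _ n _ m])
  finally show ?thesis .
qed

lemma det_mat_diag: "det (mat_diag n f) = (\<Prod>i<n. f i :: 'a :: comm_ring_1)"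
proof -
  have "upper_triangular (mat_diag n f)" unfolding upper_triangular_def mat_diag_def by auto
  then have "det (mat_diag n f) = prod_list (diag_mat (mat_diag n f))"
    by (rule det_upper_triangular) (rule mat_diag_dim)
  also have "\<dots> = (\<Prod>i<n. f i)"
    by (simp add: prod_list_diag_prod mat_diag_def atLeast0LessThan)
  finally show ?thesis .
qed

lemma square_zero_one_plus_smult_mult:
  fixes N :: "'a :: comm_ring_1 mat"
  assumes N: "N \<in> carrier_mat k k" and NN: "N * N = 0\<^sub>m k k"
  shows "(1\<^sub>m k + a \<cdot>\<^sub>m N) * (1\<^sub>m k + b \<cdot>\<^sub>m N) = 1\<^sub>m k + (a + b) \<cdot>\<^sub>m N"
proof -
  have square_zero: "(a \<cdot>\<^sub>m N) * (b \<cdot>\<^sub>m N) = 0\<^sub>m k k"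
    using N NN
    by (simp add: mult_smult_assoc_mat[OF N, of _ k] mult_smult_distrib[OF N N])
  have "(1\<^sub>m k + a \<cdot>\<^sub>m N) * (1\<^sub>m k + b \<cdot>\<^sub>m N) = (1\<^sub>m k + b \<cdot>\<^sub>m N) + ((a \<cdot>\<^sub>m N) + 0\<^sub>m k k)"
  proof -
    have c1: "1\<^sub>m k \<in> carrier_mat k k" and c2: "a \<cdot>\<^sub>m N \<in> carrier_mat k k"
      and c3: "b \<cdot>\<^sub>m N \<in> carrier_mat k k" using N by auto
    have "(1\<^sub>m k + a \<cdot>\<^sub>m N) * (1\<^sub>m k + b \<cdot>\<^sub>m N) = 1\<^sub>m k * (1\<^sub>m k + b \<cdot>\<^sub>m N) + (a \<cdot>\<^sub>m N) * (1\<^sub>m k + b \<cdot>\<^sub>m N)"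
      by (rule add_mult_distrib_mat[OF c1 c2 add_carrier_mat[OF c3]])
    also have "(a \<cdot>\<^sub>m N) * (1\<^sub>m k + b \<cdot>\<^sub>m N) = (a \<cdot>\<^sub>m N) * 1\<^sub>m k + (a \<cdot>\<^sub>m N) * (b \<cdot>\<^sub>m N)"
      by (rule mult_add_distrib_mat[OF c2 c1 c3])
    finally show ?thesis using square_zero c1 c2 c3 by (simp add: left_mult_one_mat[OF add_carrier_mat[OF c3]] right_mult_one_mat[OF c2])
  qed
  also have "\<dots> = 1\<^sub>m k + (a + b) \<cdot>\<^sub>m N"
    using N by (intro eq_matI) (auto simp: algebra_simps)
  finally show ?thesis .
qed

lemma det_one_plus_square_zero:
  fixes N S :: "'a :: linordered_field mat"
  assumes N: "N \<in> carrier_mat k k" and S: "S \<in> carrier_mat k k"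
    and NN: "N * N = 0\<^sub>m k k" and SS: "S * S = 1\<^sub>m k" and SNS: "S * N * S = - N"
  shows "det (1\<^sub>m k + r \<cdot>\<^sub>m N) = 1"
proof -
  \<comment> \<open>\<open>g\<close> is multiplicative, even by conjugation with \<open>S\<close>, and a square; hence \<open>g r\<^sup>2 = g 0 = 1\<close> and \<open>g r \<ge> 0\<close>.\<close>
  define g where "g r = det (1\<^sub>m k + r \<cdot>\<^sub>m N)" for r
  have g_add: "g a * g b = g (a + b)" for a b
    unfolding g_def using N
    by (subst det_mult[symmetric, of _ k]) (auto simp: square_zero_one_plus_smult_mult[OF N NN])
  have "1\<^sub>m k + 0 \<cdot>\<^sub>m N = 1\<^sub>m k" using N by (intro eq_matI) auto
  then have g_zero: "g 0 = 1" unfolding g_def by simp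
  have "S * (1\<^sub>m k + r \<cdot>\<^sub>m N) * S = (S + r \<cdot>\<^sub>m (S * N)) * S"
    using N S by (simp add: mult_add_distrib_mat[OF S one_carrier_mat smult_carrier_mat[OF N]]
        mult_smult_distrib[OF S N])
  also have "\<dots> = S * S + r \<cdot>\<^sub>m (S * N * S)"
    using N S by (simp add: add_mult_distrib_mat[OF S smult_carrier_mat[OF mult_carrier_mat[OF S N]] S]
        mult_smult_assoc_mat[OF mult_carrier_mat[OF S N] S])
  also have "\<dots> = 1\<^sub>m k + (-r) \<cdot>\<^sub>m N"
    unfolding SS SNS using N by (intro eq_matI) auto
  finally have "det S * g r * det S = g (-r)"
    unfolding g_def using N S by (metis add_carrier_mat det_mult mult_carrier_mat smult_carrier_mat)
  moreover have "det S * det S = 1" using det_mult[OF S S] SS by simp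
  ultimately have "g (-r) = g r" by (metis mult.commute mult.left_commute mult_1)
  then have "g r * g r = 1" using g_add[of r "-r"] g_zero by simp
  moreover have "g r \<ge> 0"
    using g_add[of "r/2" "r/2"] by (metis field_sum_of_halves zero_le_square)
  ultimately show ?thesis
    unfolding g_def by (metis abs_of_nonneg abs_square_eq_1 power2_eq_square)
qed

lemma one_minus_mult_factor:
  fixes X Y :: "'a :: comm_ring_1 mat"
  assumes X: "X \<in> carrier_mat k k" and Y: "Y \<in> carrier_mat k k"
    and XX: "X * X = 0\<^sub>m k k" and YY: "Y * Y = 0\<^sub>m k k"
  shows "(1\<^sub>m k - X) * (1\<^sub>m k + X + Y) * (1\<^sub>m k - Y) = 1\<^sub>m k - X * Y"
proof -
  have I: "1\<^sub>m k \<in> carrier_mat k k" by simp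
  have M: "1\<^sub>m k + X + Y \<in> carrier_mat k k" using X Y by simp
  have XY: "X * Y \<in> carrier_mat k k" using X Y by simp
  have "X * (1\<^sub>m k + X + Y) = X * (1\<^sub>m k + X) + X * Y"
    by (rule mult_add_distrib_mat[OF X _ Y]) (use X in simp)
  also have "X * (1\<^sub>m k + X) = X * 1\<^sub>m k + X * X"
    by (rule mult_add_distrib_mat[OF X I X])
  finally have X_middle: "X * (1\<^sub>m k + X + Y) = X + 0\<^sub>m k k + X * Y" using X XX by simp
  have "(1\<^sub>m k - X) * (1\<^sub>m k + X + Y) = 1\<^sub>m k * (1\<^sub>m k + X + Y) - X * (1\<^sub>m k + X + Y)"
    by (rule minus_mult_distrib_mat[OF I X M])
  also have "\<dots> = 1\<^sub>m k + Y - X * Y"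
    unfolding X_middle left_mult_one_mat[OF M] using X Y XY by (intro eq_matI) auto
  finally have left_product: "(1\<^sub>m k - X) * (1\<^sub>m k + X + Y) = 1\<^sub>m k + Y - X * Y" .
  have M2: "1\<^sub>m k + Y - X * Y \<in> carrier_mat k k" using minus_carrier_mat[OF XY] by simp
  have "(1\<^sub>m k + Y - X * Y) * Y = (1\<^sub>m k + Y) * Y - (X * Y) * Y"
    by (rule minus_mult_distrib_mat[OF _ XY Y]) (use Y in simp)
  also have "(1\<^sub>m k + Y) * Y = 1\<^sub>m k * Y + Y * Y"
    by (rule add_mult_distrib_mat[OF I Y Y])
  also have "(X * Y) * Y = X * (Y * Y)" using X Y by simp
  finally have middle_Y: "(1\<^sub>m k + Y - X * Y) * Y = Y + 0\<^sub>m k k - 0\<^sub>m k k"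
    using X Y YY by simp
  have "(1\<^sub>m k + Y - X * Y) * (1\<^sub>m k - Y) = (1\<^sub>m k + Y - X * Y) * 1\<^sub>m k - (1\<^sub>m k + Y - X * Y) * Y"
    by (rule mult_minus_distrib_mat[OF M2 I Y])
  also have "\<dots> = 1\<^sub>m k - X * Y"
    unfolding middle_Y right_mult_one_mat[OF M2] using X Y XY by (intro eq_matI) auto
  finally show ?thesis unfolding left_product .
qed

lemma det_one_plus_square_zero_sym:
  fixes N S :: "'a :: linordered_field mat"
  assumes N: "N \<in> carrier_mat k k" and S: "S \<in> carrier_mat k k"
    and NN: "N * N = 0\<^sub>m k k" and SS: "S * S = 1\<^sub>m k" and S_sym: "transpose_mat S = S"
    and SNS: "S * N * S = - N"
  shows "det (1\<^sub>m k + t \<cdot>\<^sub>m N + t \<cdot>\<^sub>m transpose_mat N)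
    = det (1\<^sub>m k - t\<^sup>2 \<cdot>\<^sub>m (N * transpose_mat N))"
proof -
  have Nt: "transpose_mat N \<in> carrier_mat k k" using N by simp
  have NtNt: "transpose_mat N * transpose_mat N = 0\<^sub>m k k"
    using N NN by (metis transpose_mult zero_transpose_mat)
  have "transpose_mat (S * N * S) = S * transpose_mat N * S"
    by (simp only: transpose_mult[OF mult_carrier_mat[OF S N] S] transpose_mult[OF S N] S_sym)
      (use N S in simp)
  then have SNtS: "S * transpose_mat N * S = - transpose_mat N"
    unfolding SNS transpose_uminus by (rule sym)
  have square_zero: "(c \<cdot>\<^sub>m M) * (c \<cdot>\<^sub>m M) = 0\<^sub>m k k"
    if "M \<in> carrier_mat k k" "M * M = 0\<^sub>m k k" for c and M :: "'a mat"
    using that by (simp add: mult_smult_assoc_mat[of _ k k] mult_smult_distrib[of _ k k])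
  have det_one_minus: "det (1\<^sub>m k - t \<cdot>\<^sub>m M) = 1"
    if "M \<in> carrier_mat k k" "M * M = 0\<^sub>m k k" "S * M * S = - M" for M
  proof -
    have "1\<^sub>m k - t \<cdot>\<^sub>m M = 1\<^sub>m k + (-t) \<cdot>\<^sub>m M" using that(1) by (intro eq_matI) auto
    then show ?thesis using det_one_plus_square_zero[OF that(1) S that(2) SS that(3)] by simp
  qed
  have minus_N: "1\<^sub>m k - t \<cdot>\<^sub>m N \<in> carrier_mat k k"
    and middle: "1\<^sub>m k + t \<cdot>\<^sub>m N + t \<cdot>\<^sub>m transpose_mat N \<in> carrier_mat k k"
    and minus_Nt: "1\<^sub>m k - t \<cdot>\<^sub>m transpose_mat N \<in> carrier_mat k k"
    using N by auto
  have "(1\<^sub>m k - t \<cdot>\<^sub>m N) * (1\<^sub>m k + t \<cdot>\<^sub>m N + t \<cdot>\<^sub>m transpose_mat N) * (1\<^sub>m k - t \<cdot>\<^sub>m transpose_mat N)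
      = 1\<^sub>m k - (t \<cdot>\<^sub>m N) * (t \<cdot>\<^sub>m transpose_mat N)"
    using N by (intro one_minus_mult_factor square_zero NN NtNt) auto
  then have "det (1\<^sub>m k - t \<cdot>\<^sub>m N) * det (1\<^sub>m k + t \<cdot>\<^sub>m N + t \<cdot>\<^sub>m transpose_mat N)
      * det (1\<^sub>m k - t \<cdot>\<^sub>m transpose_mat N) = det (1\<^sub>m k - (t \<cdot>\<^sub>m N) * (t \<cdot>\<^sub>m transpose_mat N))"
    by (metis det_mult minus_N middle minus_Nt mult_carrier_mat)
  moreover have "(t \<cdot>\<^sub>m N) * (t \<cdot>\<^sub>m transpose_mat N) = t\<^sup>2 \<cdot>\<^sub>m (N * transpose_mat N)"
  proof -
    have "(t \<cdot>\<^sub>m N) * (t \<cdot>\<^sub>m transpose_mat N) = t \<cdot>\<^sub>m (t \<cdot>\<^sub>m (N * transpose_mat N))"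
      using N Nt by (simp add: mult_smult_assoc_mat[of _ k k] mult_smult_distrib[of _ k k])
    also have "\<dots> = t\<^sup>2 \<cdot>\<^sub>m (N * transpose_mat N)"
      by (rule eq_matI) (auto simp: power2_eq_square)
    finally show ?thesis .
  qed
  ultimately show ?thesis
    using det_one_minus[OF N NN SNS] det_one_minus[OF Nt NtNt SNtS] by simp
qed

lemma det_one_plus_mult_inverse_mult:
  fixes A B X Y :: "'a :: idom mat"
  assumes A: "A \<in> carrier_mat n m" and B: "B \<in> carrier_mat m n"
    and X: "X \<in> carrier_mat m m" and Y: "Y \<in> carrier_mat m m" and XY: "X * Y = 1\<^sub>m m"
  shows "det (1\<^sub>m n + A * Y * B) * det X = det (X + B * A)"
proof -
  have "det (1\<^sub>m n + A * Y * B) = det (1\<^sub>m m + B * A * Y)"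
    using A B Y by (subst det_one_plus_mult_commute[of _ n m]) auto
  also have "1\<^sub>m m + B * A * Y = (X + B * A) * Y"
    using A B X Y XY by (simp add: add_mult_distrib_mat[of _ m m])
  finally have "det (1\<^sub>m n + A * Y * B) = det (X + B * A) * det Y"
    using A B X Y by (simp add: det_mult[of _ m])
  moreover have "det Y * det X = 1"
    using X Y XY by (metis det_mult det_one mult.commute)
  ultimately show ?thesis by (metis mult.assoc mult_1_right)
qed

lemma mat_inverse_if_det_nonzero:
  fixes A :: "'a :: field mat"
  assumes A: "A \<in> carrier_mat n n" and "det A \<noteq> 0"
  obtains B where "mat_inverse A = Some B"
proof (cases "mat_inverse A")
  case None
  then show ?thesis
    using mat_inverse(1)[OF A None, of "()"] det_non_zero_imp_unit[OF assms, of "()"] by simp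
qed (use that in simp)

lemma wdigraph_nth:
  assumes "wdigraph n es w" and "e < length es"
  shows "fst (es ! e) < n" "snd (es ! e) < n"
proof -
  have "es ! e \<in> set es" using assms(2) by simp
  then show "fst (es ! e) < n" "snd (es ! e) < n"
    using assms(1) unfolding wdigraph_def by (auto simp: case_prod_beta)
qed

lemma loopless_nth: "loopless es \<Longrightarrow> e < length es \<Longrightarrow> fst (es ! e) \<noteq> snd (es ! e)"
  unfolding loopless_def using nth_mem by (fastforce simp: case_prod_beta)

lemma sum_nth_distinct: "distinct xs \<Longrightarrow> (\<Sum>i<length xs. f (xs ! i)) = (\<Sum>x\<in>set xs. f x)"
  by (rule sum.reindex_bij_betw[OF bij_betw_nth]) auto

lemma prod_nth_distinct: "distinct xs \<Longrightarrow> (\<Prod>i<length xs. f (xs ! i)) = (\<Prod>x\<in>set xs. f x)"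
  by (rule prod.reindex_bij_betw[OF bij_betw_nth]) auto

text \<open>The backtracking part of the weighted edge-adjacency matrix (pairs an edge with its reverse)
  is split as \<open>N + N\<^sup>T\<close>: \<open>N\<close> keeps the entries whose first edge descends, \<open>snd < fst\<close>.\<close>

definition recip_mat :: "(nat \<times> nat) list \<Rightarrow> (nat \<times> nat \<Rightarrow> real) \<Rightarrow> real mat" where
  "recip_mat es w = mat (length es) (length es) (\<lambda>(e,f).
     if es ! f = prod.swap (es ! e) \<and> snd (es ! e) < fst (es ! e)
     then sqrt (w (es ! e) * w (es ! f)) else 0)"

definition edge_sign_mat :: "(nat \<times> nat) list \<Rightarrow> real mat" where
  "edge_sign_mat es = mat_diag (length es) (\<lambda>e. if fst (es ! e) < snd (es ! e) then 1 else -1)"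

lemma recip_mat_dim [simp]:
  "dim_row (recip_mat es w) = length es" "dim_col (recip_mat es w) = length es"
  unfolding recip_mat_def by simp_all

lemma recip_mat_carrier [simp]: "recip_mat es w \<in> carrier_mat (length es) (length es)"
  by (simp add: carrier_matI)

lemma edge_sign_mat_carrier [simp]: "edge_sign_mat es \<in> carrier_mat (length es) (length es)"
  unfolding edge_sign_mat_def by simp

lemma recip_mat_square_zero: "recip_mat es w * recip_mat es w = 0\<^sub>m (length es) (length es)"
proof (rule eq_matI)
  fix e f assume "e < dim_row (0\<^sub>m (length es) (length es))" "f < dim_col (0\<^sub>m (length es) (length es))"
  then have e: "e < length es" and f: "f < length es" by auto
  have zero: "recip_mat es w $$ (e, g) * recip_mat es w $$ (g, f) = 0" if "g < length es" for g
    using e f that by (auto simp: recip_mat_def)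
  have "(recip_mat es w * recip_mat es w) $$ (e, f)
      = (\<Sum>g\<in>{0..<length es}. recip_mat es w $$ (e, g) * recip_mat es w $$ (g, f))"
    using e f by (simp add: scalar_prod_def)
  also have "\<dots> = 0" by (rule sum.neutral) (simp add: zero)
  finally show "(recip_mat es w * recip_mat es w) $$ (e, f) = 0\<^sub>m (length es) (length es) $$ (e, f)"
    using e f by simp
qed auto

lemma edge_sign_mat_square: "edge_sign_mat es * edge_sign_mat es = 1\<^sub>m (length es)"
proof -
  have "(\<lambda>e. (if fst (es ! e) < snd (es ! e) then 1 else -1) * (if fst (es ! e) < snd (es ! e) then 1 else -1 :: real))
      = (\<lambda>_. 1)" by auto
  then show ?thesis unfolding edge_sign_mat_def mat_diag_diag by simp
qed

lemma transpose_edge_sign_mat: "transpose_mat (edge_sign_mat es) = edge_sign_mat es"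
  unfolding edge_sign_mat_def mat_diag_def by (rule eq_matI) auto

lemma edge_sign_conj_recip_mat: "edge_sign_mat es * recip_mat es w * edge_sign_mat es = - recip_mat es w"
  unfolding edge_sign_mat_def
  by (simp add: mat_diag_mult_left[of _ "length es" "length es"] mat_diag_mult_right[of _ "length es"])
    (rule eq_matI; auto simp: recip_mat_def)

lemma sqrt_weight_mat_eq_mat_diag:
  "sqrt_weight_mat es w = mat_diag (length es) (\<lambda>e. sqrt (w (es ! e)))"
  unfolding sqrt_weight_mat_def weight_mat_def mat_diag_def by (rule eq_matI) auto

lemma sqrt_weight_tgt_src_sqrt_weight:
  assumes wd: "wdigraph n es w" and ll: "loopless es"
  shows "sqrt_weight_mat es w * tgt_mat n es * (transpose_mat (src_mat n es) * sqrt_weight_mat es w)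
    = nb_mat es w + recip_mat es w + transpose_mat (recip_mat es w)"
proof (rule eq_matI)
  fix e f assume "e < dim_row (nb_mat es w + recip_mat es w + transpose_mat (recip_mat es w))"
    "f < dim_col (nb_mat es w + recip_mat es w + transpose_mat (recip_mat es w))"
  then have e: "e < length es" and f: "f < length es" by (auto simp: nb_mat_def)
  have tgt_e: "snd (es ! e) < n" using wdigraph_nth[OF wd e] by simp
  have no_loop: "fst (es ! e) \<noteq> snd (es ! e)" "fst (es ! f) \<noteq> snd (es ! f)"
    using loopless_nth[OF ll] e f by simp_all
  have "(sqrt_weight_mat es w * tgt_mat n es * (transpose_mat (src_mat n es) * sqrt_weight_mat es w)) $$ (e, f)
      = (\<Sum>j\<in>{0..<n}. (sqrt (w (es ! e)) * (if snd (es ! e) = j then 1 else 0))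
          * ((if fst (es ! f) = j then 1 else 0) * sqrt (w (es ! f))))"
    using e f unfolding sqrt_weight_mat_eq_mat_diag
    by (simp add: mat_diag_mult_left[of _ _ n] mat_diag_mult_right[of _ n] tgt_mat_def src_mat_def scalar_prod_def)
  also have "\<dots> = (\<Sum>j\<in>{0..<n}. if j = snd (es ! e)
      then (if snd (es ! e) = fst (es ! f) then sqrt (w (es ! e) * w (es ! f)) else 0) else 0)"
    by (rule sum.cong) (auto simp: real_sqrt_mult)
  also have "\<dots> = (if snd (es ! e) = fst (es ! f) then sqrt (w (es ! e) * w (es ! f)) else 0)"
    using tgt_e by simp
  also have "\<dots> = (nb_mat es w + recip_mat es w + transpose_mat (recip_mat es w)) $$ (e, f)"
  proof -
    obtain a b c d where edges: "es ! e = (a, b)" "es ! f = (c, d)" by fastforce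
    then have "a \<noteq> b" "c \<noteq> d" using no_loop by simp_all
    then show ?thesis using e f edges by (auto simp: nb_mat_def recip_mat_def mult.commute)
  qed
  finally show "(sqrt_weight_mat es w * tgt_mat n es * (transpose_mat (src_mat n es) * sqrt_weight_mat es w)) $$ (e, f)
      = (nb_mat es w + recip_mat es w + transpose_mat (recip_mat es w)) $$ (e, f)" .
qed (auto simp: nb_mat_def sqrt_weight_mat_eq_mat_diag mat_diag_def tgt_mat_def src_mat_def)

definition recip_weight :: "(nat \<times> nat) list \<Rightarrow> (nat \<times> nat \<Rightarrow> real) \<Rightarrow> nat \<times> nat \<Rightarrow> real" where
  "recip_weight es w p = (if snd p < fst p \<and> prod.swap p \<in> set es then w p * w (prod.swap p) else 0)"

lemma recip_mat_mult_transpose: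
  assumes wd: "wdigraph n es w"
  shows "recip_mat es w * transpose_mat (recip_mat es w)
    = mat_diag (length es) (\<lambda>e. recip_weight es w (es ! e))"
proof (rule eq_matI)
  fix e f assume "e < dim_row (mat_diag (length es) (\<lambda>e. recip_weight es w (es ! e)))"
    "f < dim_col (mat_diag (length es) (\<lambda>e. recip_weight es w (es ! e)))"
  then have e: "e < length es" and f: "f < length es" by (auto simp: mat_diag_def)
  have distinct: "distinct es" and pos: "\<And>p. p \<in> set es \<Longrightarrow> w p > 0"
    using wd unfolding wdigraph_def by auto
  define F where "F p q = (if q = prod.swap p \<and> snd p < fst p then sqrt (w p * w q) else 0)" for p q
  have "(recip_mat es w * transpose_mat (recip_mat es w)) $$ (e, f)
      = (\<Sum>g<length es. F (es ! e) (es ! g) * F (es ! f) (es ! g))"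
    using e f by (simp add: scalar_prod_def recip_mat_def F_def atLeast0LessThan)
  also have "\<dots> = (\<Sum>q\<in>set es. F (es ! e) q * F (es ! f) q)"
    by (rule sum_nth_distinct[OF distinct])
  also have "\<dots> = (\<Sum>q\<in>set es. if q = prod.swap (es ! e)
      then (if snd (es ! e) < fst (es ! e) then sqrt (w (es ! e) * w q) * F (es ! f) q else 0) else 0)"
    by (rule sum.cong) (auto simp: F_def)
  also have "\<dots> = (if e = f then recip_weight es w (es ! e) else 0)"
  proof -
    have "prod.swap (es ! e) = prod.swap (es ! f) \<longleftrightarrow> e = f"
      using e f distinct by (metis nth_eq_iff_index_eq swap_swap)
    moreover have "0 \<le> w (es ! e) * w (prod.swap (es ! e))" if "prod.swap (es ! e) \<in> set es"
      using pos[OF that] pos[OF nth_mem[OF e]] by simp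
    ultimately show ?thesis by (auto simp: F_def recip_weight_def)
  qed
  finally show "(recip_mat es w * transpose_mat (recip_mat es w)) $$ (e, f)
      = mat_diag (length es) (\<lambda>e. recip_weight es w (es ! e)) $$ (e, f)"
    using e f by (simp add: mat_diag_def)
qed (auto simp: mat_diag_def)

lemma prod_recip_weight:
  assumes "distinct es"
  shows "(\<Prod>e<length es. 1 - t\<^sup>2 * recip_weight es w (es ! e))
    = (\<Prod>(u,v)\<in>recip_pairs es. 1 - t\<^sup>2 * w (u,v) * w (v,u))"
proof -
  define D where "D = {p \<in> set es. snd p < fst p \<and> prod.swap p \<in> set es}"
  have "(\<Prod>e<length es. 1 - t\<^sup>2 * recip_weight es w (es ! e))
      = (\<Prod>p\<in>set es. 1 - t\<^sup>2 * recip_weight es w p)"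
    by (rule prod_nth_distinct[OF assms])
  also have "\<dots> = (\<Prod>p\<in>D. 1 - t\<^sup>2 * w p * w (prod.swap p))"
    by (rule prod.mono_neutral_cong_right) (auto simp: D_def recip_weight_def)
  also have "\<dots> = (\<Prod>(u,v)\<in>prod.swap ` D. 1 - t\<^sup>2 * w (u,v) * w (v,u))"
    by (simp add: prod.reindex case_prod_beta ac_simps)
  also have "prod.swap ` D = recip_pairs es"
    by (force simp: D_def recip_pairs_def)
  finally show ?thesis .
qed

lemma det_one_plus_recip_mat:
  assumes wd: "wdigraph n es w"
  shows "det (1\<^sub>m (length es) + t \<cdot>\<^sub>m recip_mat es w + t \<cdot>\<^sub>m transpose_mat (recip_mat es w))
    = (\<Prod>(u,v)\<in>recip_pairs es. 1 - t\<^sup>2 * w (u,v) * w (v,u))"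
proof -
  let ?m = "length es"
  have "det (1\<^sub>m ?m + t \<cdot>\<^sub>m recip_mat es w + t \<cdot>\<^sub>m transpose_mat (recip_mat es w))
      = det (1\<^sub>m ?m - t\<^sup>2 \<cdot>\<^sub>m (recip_mat es w * transpose_mat (recip_mat es w)))"
    by (rule det_one_plus_square_zero_sym[OF recip_mat_carrier edge_sign_mat_carrier
          recip_mat_square_zero edge_sign_mat_square transpose_edge_sign_mat edge_sign_conj_recip_mat])
  also have "1\<^sub>m ?m - t\<^sup>2 \<cdot>\<^sub>m (recip_mat es w * transpose_mat (recip_mat es w))
      = mat_diag ?m (\<lambda>e. 1 - t\<^sup>2 * recip_weight es w (es ! e))"
    unfolding recip_mat_mult_transpose[OF wd] by (rule eq_matI) (auto simp: mat_diag_def)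
  also have "det \<dots> = (\<Prod>(u,v)\<in>recip_pairs es. 1 - t\<^sup>2 * w (u,v) * w (v,u))"
    using wd unfolding det_mat_diag wdigraph_def by (simp add: prod_recip_weight)
  finally show ?thesis .
qed

lemma det_Phi_mat_mult_det:
  assumes wd: "wdigraph n es w" and ll: "loopless es"
    and det_nonzero: "det (1\<^sub>m (length es) - t \<cdot>\<^sub>m nb_mat es w) \<noteq> 0"
  shows "det (Phi_mat n es w t) * det (1\<^sub>m (length es) - t \<cdot>\<^sub>m nb_mat es w)
    = det (1\<^sub>m (length es) + t \<cdot>\<^sub>m recip_mat es w + t \<cdot>\<^sub>m transpose_mat (recip_mat es w))"
proof -
  let ?m = "length es"
  define X where "X = 1\<^sub>m ?m - t \<cdot>\<^sub>m nb_mat es w"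
  define Lt where "Lt = transpose_mat (src_mat n es)"
  define A where "A = t \<cdot>\<^sub>m (Lt * sqrt_weight_mat es w)"
  define B where "B = sqrt_weight_mat es w * tgt_mat n es"
  have Sq: "sqrt_weight_mat es w \<in> carrier_mat ?m ?m"
    by (simp add: sqrt_weight_mat_eq_mat_diag)
  have Lt: "Lt \<in> carrier_mat n ?m" and R: "tgt_mat n es \<in> carrier_mat ?m n"
    by (simp_all add: Lt_def src_mat_def tgt_mat_def)
  have X: "X \<in> carrier_mat ?m ?m" and A: "A \<in> carrier_mat n ?m" and B: "B \<in> carrier_mat ?m n"
    unfolding X_def A_def B_def using Sq Lt R by (auto simp: nb_mat_def)
  obtain Y where inv: "mat_inverse X = Some Y"
    using mat_inverse_if_det_nonzero[OF X] det_nonzero unfolding X_def by blast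
  then have XY: "X * Y = 1\<^sub>m ?m" and Y: "Y \<in> carrier_mat ?m ?m"
    using mat_inverse(2)[OF X] by auto
  have "Phi_mat n es w t = 1\<^sub>m n + t \<cdot>\<^sub>m (Lt * sqrt_weight_mat es w * Y * sqrt_weight_mat es w * tgt_mat n es)"
    unfolding Phi_mat_def Lt_def[symmetric] X_def[symmetric] inv by simp
  also have "Lt * sqrt_weight_mat es w * Y * sqrt_weight_mat es w * tgt_mat n es
      = Lt * sqrt_weight_mat es w * Y * B"
    unfolding B_def using Lt Sq Y R by (meson assoc_mult_mat mult_carrier_mat)
  also have "t \<cdot>\<^sub>m (Lt * sqrt_weight_mat es w * Y * B) = A * Y * B"
    unfolding A_def using Lt Sq Y B
    by (metis mult_carrier_mat mult_smult_assoc_mat)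
  finally have "Phi_mat n es w t = 1\<^sub>m n + A * Y * B" .
  moreover have "X + B * A = 1\<^sub>m ?m + t \<cdot>\<^sub>m recip_mat es w + t \<cdot>\<^sub>m transpose_mat (recip_mat es w)"
  proof -
    have "B * A = t \<cdot>\<^sub>m (B * (Lt * sqrt_weight_mat es w))"
      unfolding A_def using Lt Sq by (intro mult_smult_distrib[OF B] mult_carrier_mat)
    also have "B * (Lt * sqrt_weight_mat es w) = nb_mat es w + recip_mat es w + transpose_mat (recip_mat es w)"
      unfolding B_def Lt_def by (rule sqrt_weight_tgt_src_sqrt_weight[OF wd ll])
    finally have "B * A = t \<cdot>\<^sub>m (nb_mat es w + recip_mat es w + transpose_mat (recip_mat es w))" .
    then show ?thesis
      unfolding X_def by (intro eq_matI) (auto simp: nb_mat_def algebra_simps)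
  qed
  ultimately show ?thesis
    using det_one_plus_mult_inverse_mult[OF A B X Y XY] unfolding X_def by simp
qed

theorem theorem5p6:
  fixes n :: nat and es :: "(nat \<times> nat) list" and w :: "nat \<times> nat \<Rightarrow> real" and t :: real
  assumes "wdigraph n es w" and "loopless es"
    and "det (1\<^sub>m (length es) - t \<cdot>\<^sub>m nb_mat es w) \<noteq> 0"
  shows "det (Phi_mat n es w t) =
    (\<Prod>(u,v)\<in>recip_pairs es. 1 - t\<^sup>2 * w (u,v) * w (v,u)) / det (1\<^sub>m (length es) - t \<cdot>\<^sub>m nb_mat es w)"
  using det_Phi_mat_mult_det[OF assms] det_one_plus_recip_mat[OF assms(1)] assms(3)
  by (simp add: eq_divide_eq)

end
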